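(* Let $f:\mathbb{R}^n\to\mathbb{R}$ be a continuously differentiable convex function, and $s$ a positive integer. Let $h(x)=\sum_{i=1}^n h_i(x_i)$ with each $h_i:\mathbb{R}\to\mathbb{R}$ convex and continuously differentiable, and assume $h$ is supercoercive ($\lim_{\|x\|\to\infty}h(x)/\|x\|=\infty$). Assume $L_h h-f$ is convex for some $L_h>0$ and let $L>L_h$. Let $(x_k)$ be generated by the BPG algorithm with $h$ and $L$. Then every limit point $\bar x$ of $(x_k)$ is $L$-Bregman stationary, i.e. $$\bar x\in\operatorname*{argmin}_{y\in C_s}\ \nabla f(\bar x)^T(y-\bar x)+L D_h(y,\bar x).$$
   Context: $C_s=\{x\in\mathbb{R}^n:\|x\|_0\le s\}$ where $\|x\|_0$ is the number of nonzero entries. $D_h(y,x)=h(y)-h(x)-\nabla h(x)^T(y-x)$. BPG algorithm: start from $x_0\in C_s$ and for $k\ge0$ pick $x_{k+1}\in\operatorname{argmin}_{x\in C_s}\ \nabla f(x_k)^T(x-x_k)+LD_h(x,x_k)$. *)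

theory Defs
  imports "HOL-Analysis.Analysis"
begin

definition l0norm :: "real^'n \<Rightarrow> nat" where
  "l0norm x = card {i. x $ i \<noteq> 0}"

definition sparse_set :: "nat \<Rightarrow> (real^'n) set" ("C\<^sub>_") where
  "sparse_set s = {x. l0norm x \<le> s}"

definition bregman :: "(real^'n \<Rightarrow> real) \<Rightarrow> (real^'n \<Rightarrow> real^'n) \<Rightarrow> real^'n \<Rightarrow> real^'n \<Rightarrow> real" where
  "bregman h gh y x = h y - h x - gh x \<bullet> (y - x)"

definition argmin_on :: "('a \<Rightarrow> real) \<Rightarrow> 'a set \<Rightarrow> 'a set" where
  "argmin_on g S = {x \<in> S. \<forall>y\<in>S. g x \<le> g y}"

definition bpg_obj :: "(real^'n \<Rightarrow> real^'n) \<Rightarrow> (real^'n \<Rightarrow> real) \<Rightarrow> (real^'n \<Rightarrow> real^'n) \<Rightarrow> real \<Rightarrow> real^'n \<Rightarrow> real^'n \<Rightarrow> real" where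
  "bpg_obj gf h gh L x y = gf x \<bullet> (y - x) + L * bregman h gh y x"

end

theory Submission
  imports Defs
begin

text \<open>
  Convexity of \<open>L\<^sub>h h - f\<close> is the descent lemma
  \<open>f y \<le> f x + \<nabla>f(x)\<^sup>T(y - x) + L\<^sub>h D\<^sub>h(y,x)\<close>, and convexity of \<open>h\<close> (which follows from that
  of \<open>f\<close> and \<open>L\<^sub>h h - f\<close>) gives \<open>D\<^sub>h \<ge> 0\<close>. As \<open>L > L\<^sub>h\<close>, the BPG objective centred at \<open>x\<close>
  therefore majorises \<open>f y - f x\<close> and vanishes at \<open>y = x\<close>. Hence \<open>f(x\<^sub>k)\<close> decreases, and
  \<open>f(x\<^sub>k\<^sub>+\<^sub>1) - f(x\<^sub>k)\<close> is at most the objective centred at \<open>x\<^sub>k\<close> evaluated at any \<open>y \<in> C\<^sub>s\<close>.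
  Along a subsequence converging to \<open>xbar\<close>, the left-hand side tends to \<open>0\<close> and the
  right-hand side to the objective centred at \<open>xbar\<close>; and \<open>xbar \<in> C\<^sub>s\<close> because \<open>C\<^sub>s\<close> is closed.
\<close>

lemma convex_on_gradient_inequality:
  fixes g :: "'a::real_inner \<Rightarrow> real"
  assumes convex: "convex_on UNIV g" and deriv: "(g has_derivative (\<lambda>v. v \<bullet> G)) (at x)"
  shows "g x + G \<bullet> (y - x) \<le> g y"
proof -
  define \<phi> where "\<phi> t = g (x + t *\<^sub>R (y - x))" for t :: real
  have "convex_on UNIV \<phi>"
  proof (rule convex_onI)
    fix t a b :: real
    assume "0 < t" "t < 1"
    have "x + ((1 - t) *\<^sub>R a + t *\<^sub>R b) *\<^sub>R (y - x)
        = (1 - t) *\<^sub>R (x + a *\<^sub>R (y - x)) + t *\<^sub>R (x + b *\<^sub>R (y - x))"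
      by (simp add: algebra_simps)
    then show "\<phi> ((1 - t) *\<^sub>R a + t *\<^sub>R b) \<le> (1 - t) * \<phi> a + t * \<phi> b"
      unfolding \<phi>_def using convex_onD[OF convex, of t] \<open>0 < t\<close> \<open>t < 1\<close> by simp
  qed simp
  moreover have "(\<phi> has_real_derivative G \<bullet> (y - x)) (at 0)"
  proof -
    have line: "((\<lambda>t::real. x + t *\<^sub>R (y - x)) has_derivative (\<lambda>t. t *\<^sub>R (y - x))) (at 0)"
      by (auto intro!: derivative_eq_intros)
    have "(g has_derivative (\<lambda>v. v \<bullet> G)) (at (x + 0 *\<^sub>R (y - x)))"
      using deriv by simp
    from diff_chain_at[OF line this]
    have "(\<phi> has_derivative (\<lambda>t. (t *\<^sub>R (y - x)) \<bullet> G)) (at 0)"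
      unfolding \<phi>_def[abs_def] by (simp add: o_def)
    moreover have "(\<lambda>t. (t *\<^sub>R (y - x)) \<bullet> G) = (*) (G \<bullet> (y - x))"
      by (auto simp: fun_eq_iff inner_commute)
    ultimately show ?thesis
      by (simp add: has_field_derivative_def)
  qed
  ultimately have "\<phi> 1 - \<phi> 0 \<ge> G \<bullet> (y - x) * (1 - 0)"
    by (intro convex_on_imp_above_tangent[where A = UNIV]) auto
  then show ?thesis
    unfolding \<phi>_def by simp
qed

lemma has_derivative_separable_sum:
  fixes hi dhi :: "'n::finite \<Rightarrow> real \<Rightarrow> real"
  assumes "\<And>i t. (hi i has_real_derivative dhi i t) (at t)"
  shows "((\<lambda>z::real^'n. \<Sum>i\<in>UNIV. hi i (z $ i)) has_derivative (\<lambda>v. v \<bullet> (\<chi> i. dhi i (z $ i)))) (at z)"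
proof -
  have "((\<lambda>z::real^'n. hi i (z $ i)) has_derivative (\<lambda>v. dhi i (z $ i) * v $ i)) (at z)" for i
  proof -
    have "((\<lambda>z::real^'n. z $ i) has_derivative (\<lambda>v. v $ i)) (at z)"
      by (rule bounded_linear.has_derivative[OF bounded_linear_vec_nth has_derivative_ident])
    moreover have "(hi i has_derivative (\<lambda>t. dhi i (z $ i) * t)) (at (z $ i))"
      using assms unfolding has_field_derivative_def .
    ultimately show ?thesis
      using diff_chain_at by (fastforce simp: o_def)
  qed
  then have "((\<lambda>z::real^'n. \<Sum>i\<in>UNIV. hi i (z $ i))
      has_derivative (\<lambda>v. \<Sum>i\<in>UNIV. dhi i (z $ i) * v $ i)) (at z)"
    by (rule has_derivative_sum)
  then show ?thesis
    by (simp add: inner_vec_def mult.commute)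
qed

lemma continuous_on_separable_gradient:
  fixes dhi :: "'n::finite \<Rightarrow> real \<Rightarrow> real"
  assumes "\<And>i. continuous_on UNIV (dhi i)"
  shows "continuous_on UNIV (\<lambda>z::real^'n. \<chi> i. dhi i (z $ i))"
proof (rule continuous_on_vec_lambda)
  show "continuous_on UNIV (\<lambda>z::real^'n. dhi i (z $ i))" for i
    by (rule continuous_on_compose2[OF assms continuous_on_component[OF continuous_on_id]]) auto
qed

lemma closed_sparse_set: "closed (sparse_set s)"
proof (rule closed_sequential_limits[THEN iffD2], intro allI impI, elim conjE)
  fix y :: "nat \<Rightarrow> real^'n" and l
  assume mem: "\<forall>k. y k \<in> sparse_set s" and lim: "y \<longlonglongrightarrow> l"
  have "\<forall>\<^sub>F k in sequentially. \<forall>i. l $ i \<noteq> 0 \<longrightarrow> y k $ i \<noteq> 0"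
  proof (rule eventually_all_finite)
    fix i
    show "\<forall>\<^sub>F k in sequentially. l $ i \<noteq> 0 \<longrightarrow> y k $ i \<noteq> 0"
    proof (cases "l $ i = 0")
      case False
      with tendsto_imp_eventually_ne[OF tendsto_vec_nth[OF lim]] show ?thesis
        by (auto elim: eventually_mono)
    qed simp
  qed
  then obtain k where "\<forall>i. l $ i \<noteq> 0 \<longrightarrow> y k $ i \<noteq> 0"
    unfolding eventually_sequentially by blast
  then have "card {i. l $ i \<noteq> 0} \<le> card {i. y k $ i \<noteq> 0}"
    by (intro card_mono) auto
  also have "\<dots> \<le> s"
    using mem unfolding sparse_set_def l0norm_def by simp
  finally show "l \<in> sparse_set s"
    unfolding sparse_set_def l0norm_def by simp
qed

lemma bregman_nonneg:
  assumes "convex_on UNIV h" and "(h has_derivative (\<lambda>v. v \<bullet> gh x)) (at x)"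
  shows "0 \<le> bregman h gh y x"
  using convex_on_gradient_inequality[OF assms, of y]
  by (simp add: bregman_def inner_commute)

lemma bregman_descent_lemma:
  assumes "convex_on UNIV (\<lambda>z. Lh * h z - f z)"
    and "(h has_derivative (\<lambda>v. v \<bullet> gh x)) (at x)"
    and "(f has_derivative (\<lambda>v. v \<bullet> gf x)) (at x)"
  shows "f y \<le> f x + gf x \<bullet> (y - x) + Lh * bregman h gh y x"
proof -
  have "((\<lambda>z. Lh * h z - f z) has_derivative (\<lambda>v. v \<bullet> (Lh *\<^sub>R gh x - gf x))) (at x)"
    using has_derivative_diff[OF has_derivative_mult_right[OF assms(2)] assms(3)]
    by (simp add: inner_diff_right)
  from convex_on_gradient_inequality[OF assms(1) this, of y] show ?thesis
    by (simp add: bregman_def inner_diff_left inner_commute algebra_simps)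
qed

lemma bpg_obj_majorises_decrease:
  assumes f_convex: "convex_on UNIV f" and Lh_convex: "convex_on UNIV (\<lambda>z. Lh * h z - f z)"
    and "0 < Lh" "Lh \<le> L"
    and f_deriv: "\<And>z. (f has_derivative (\<lambda>v. v \<bullet> gf z)) (at z)"
    and h_deriv: "\<And>z. (h has_derivative (\<lambda>v. v \<bullet> gh z)) (at z)"
  shows "f y - f x \<le> bpg_obj gf h gh L x y"
proof -
  have "convex_on UNIV (\<lambda>z. ((Lh * h z - f z) + f z) / Lh)"
    using Lh_convex f_convex \<open>0 < Lh\<close> by (intro convex_on_cdiv convex_on_add) auto
  then have "convex_on UNIV h"
    using \<open>0 < Lh\<close> by simp
  then have "0 \<le> bregman h gh y x"
    using h_deriv by (rule bregman_nonneg)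
  then have "Lh * bregman h gh y x \<le> L * bregman h gh y x"
    using \<open>Lh \<le> L\<close> by (intro mult_right_mono)
  moreover have "f y \<le> f x + gf x \<bullet> (y - x) + Lh * bregman h gh y x"
    by (rule bregman_descent_lemma[OF Lh_convex h_deriv f_deriv])
  ultimately show ?thesis
    by (simp add: bpg_obj_def inner_commute)
qed

lemma bpg_obj_self: "bpg_obj gf h gh L x x = 0"
  by (simp add: bpg_obj_def bregman_def)

lemma continuous_on_bpg_obj_centre:
  assumes "continuous_on UNIV gf" "continuous_on UNIV h" "continuous_on UNIV gh"
  shows "continuous_on UNIV (\<lambda>x. bpg_obj gf h gh L x y)"
  unfolding bpg_obj_def bregman_def
  by (intro continuous_intros continuous_on_compose2[OF assms(1)]
      continuous_on_compose2[OF assms(2)] continuous_on_compose2[OF assms(3)]) auto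

locale model_descent =
  fixes f :: "'a::metric_space \<Rightarrow> real" and P :: "'a \<Rightarrow> 'a \<Rightarrow> real"
    and S :: "'a set" and x :: "nat \<Rightarrow> 'a"
  assumes model_self: "\<And>a. P a a = 0"
    and model_majorises: "\<And>a b. f b - f a \<le> P a b"
    and start: "x 0 \<in> S"
    and step: "\<And>k. x (Suc k) \<in> argmin_on (P (x k)) S"
begin

lemma iterate_mem: "x k \<in> S"
  using start step by (cases k) (auto simp: argmin_on_def)

lemma decrease_le_model: "y \<in> S \<Longrightarrow> f (x (Suc k)) - f (x k) \<le> P (x k) y"
  using model_majorises[where a = "x k" and b = "x (Suc k)"] step[of k]
  by (fastforce simp: argmin_on_def)

lemma decseq_objective: "decseq (\<lambda>k. f (x k))"
proof (rule decseq_SucI)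
  fix k
  show "f (x (Suc k)) \<le> f (x k)"
    using decrease_le_model[OF iterate_mem, of k k] model_self[of "x k"] by simp
qed

lemma limit_point_in_argmin:
  assumes f_cont: "continuous_on UNIV f"
    and P_cont: "\<And>y. continuous_on UNIV (\<lambda>a. P a y)"
    and "closed S" and r: "strict_mono r" and lim: "(x \<circ> r) \<longlonglongrightarrow> xbar"
  shows "xbar \<in> argmin_on (P xbar) S"
proof -
  have f_lim: "(\<lambda>j. f (x (r j))) \<longlonglongrightarrow> f xbar"
    using continuous_on_tendsto_compose[OF f_cont lim] by (simp add: o_def)
  have f_lower: "f xbar \<le> f (x k)" for k
  proof (rule LIMSEQ_le_const2[OF f_lim], intro exI allI impI)
    fix j assume "k \<le> j"
    then have "k \<le> r j" using seq_suble[OF r, of j] by linarith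
    then show "f (x (r j)) \<le> f (x k)" using decseq_objective by (simp add: decseq_def)
  qed
  have "0 \<le> P xbar y" if "y \<in> S" for y
  proof -
    have "(\<lambda>j. f xbar - f (x (r j))) \<longlonglongrightarrow> f xbar - f xbar"
      by (intro tendsto_diff tendsto_const f_lim)
    moreover have "(\<lambda>j. P (x (r j)) y) \<longlonglongrightarrow> P xbar y"
      using continuous_on_tendsto_compose[OF P_cont lim] by (simp add: o_def)
    moreover have "f xbar - f (x (r j)) \<le> P (x (r j)) y" for j
      using decrease_le_model[OF that, of "r j"] f_lower[of "Suc (r j)"] by linarith
    ultimately show ?thesis
      by (intro LIMSEQ_le[where X = "\<lambda>j. f xbar - f (x (r j))"]) auto
  qed
  moreover have "xbar \<in> S"
    using closed_sequentially[OF \<open>closed S\<close> _ lim] iterate_mem by simp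
  ultimately show ?thesis
    unfolding argmin_on_def using model_self by auto
qed

end

theorem theoremA3:
  fixes f :: "real^'n \<Rightarrow> real" and gf :: "real^'n \<Rightarrow> real^'n"
    and hi :: "'n \<Rightarrow> real \<Rightarrow> real" and dhi :: "'n \<Rightarrow> real \<Rightarrow> real"
    and h :: "real^'n \<Rightarrow> real" and gh :: "real^'n \<Rightarrow> real^'n"
    and s :: nat and Lh L :: real and x :: "nat \<Rightarrow> real^'n" and xbar :: "real^'n"
  assumes f_grad: "\<And>z. GDERIV f z :> gf z"
    and f_C1: "continuous_on UNIV gf"
    and f_convex: "convex_on UNIV f"
    and s_pos: "s > 0"
    and hi_deriv: "\<And>i t. (hi i has_real_derivative dhi i t) (at t)"
    and hi_C1: "\<And>i. continuous_on UNIV (dhi i)"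
    and hi_convex: "\<And>i. convex_on UNIV (hi i)"
    and h_def: "\<And>z. h z = (\<Sum>i\<in>UNIV. hi i (z $ i))"
    and gh_def: "\<And>z. gh z = (\<chi> i. dhi i (z $ i))"
    and h_supercoercive: "filterlim (\<lambda>z. h z / norm z) at_top at_infinity"
    and Lh_pos: "Lh > 0"
    and Lh_convex: "convex_on UNIV (\<lambda>z. Lh * h z - f z)"
    and L_gt: "L > Lh"
    and x0: "x 0 \<in> sparse_set s"
    and x_step: "\<And>k. x (Suc k) \<in> argmin_on (bpg_obj gf h gh L (x k)) (sparse_set s)"
    and limpt: "\<exists>r. strict_mono r \<and> (x \<circ> r) \<longlonglongrightarrow> xbar"
  shows "xbar \<in> argmin_on (bpg_obj gf h gh L xbar) (sparse_set s)"
proof -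
  have f_deriv: "(f has_derivative (\<lambda>v. v \<bullet> gf z)) (at z)" for z
    using f_grad unfolding gderiv_def .
  have h_deriv: "(h has_derivative (\<lambda>v. v \<bullet> gh z)) (at z)" for z
    unfolding gh_def h_def[abs_def] by (rule has_derivative_separable_sum[OF hi_deriv])
  interpret model_descent f "bpg_obj gf h gh L" "sparse_set s" x
  proof
    show "f b - f a \<le> bpg_obj gf h gh L a b" for a b
      using bpg_obj_majorises_decrease[OF f_convex Lh_convex Lh_pos _ f_deriv h_deriv] L_gt
      by simp
  qed (use bpg_obj_self x0 x_step in auto)
  have f_cont: "continuous_on UNIV f"
    by (intro continuous_at_imp_continuous_on ballI has_derivative_continuous[OF f_deriv])
  have h_cont: "continuous_on UNIV h"
    by (intro continuous_at_imp_continuous_on ballI has_derivative_continuous[OF h_deriv])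
  have gh_cont: "continuous_on UNIV gh"
    unfolding gh_def by (rule continuous_on_separable_gradient[OF hi_C1])
  from limpt obtain r where r: "strict_mono r" "(x \<circ> r) \<longlonglongrightarrow> xbar"
    by blast
  show ?thesis
    by (rule limit_point_in_argmin[OF f_cont continuous_on_bpg_obj_centre[OF f_C1 h_cont gh_cont]
          closed_sparse_set r])
qed

end
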